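(* Let $F$ be a smooth distribution supported on $[0,1]$ with convex CDF (i.e. non-decreasing PDF $f$), and let $\epsilon>0$. Suppose we have access to a perturbed oracle $F^*$ which, when queried at $x$, returns $F^*(x)=F(x+\epsilon_1)+\epsilon_2$ for some unknown $\epsilon_1\in[-\epsilon^2/2,\epsilon^2/2]$ and $\epsilon_2\in[-\epsilon,\epsilon]$ (which may differ from query to query). Then $\tilde{O}(\epsilon^{-1/2})$ queries to $F^*$ suffice to learn $F$ within Lévy distance $O(\epsilon)$.
   Context: A distribution is smooth if it has no point masses and its PDF $f$ is $C^1$. Learning within Lévy distance $\eta$ means outputting $\hat F$ with $\mathrm{L\acute{e}vy}(F,\hat F)\le\eta$, where $\mathrm{L\acute{e}vy}(F,G)=\inf\{\epsilon: F(v-\epsilon)-\epsilon\le G(v)\le F(v+\epsilon)+\epsilon\ \forall v\}$. $\tilde{O}$ hides polylog$(1/\epsilon)$ factors. *)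

theory Defs
  imports "HOL-Analysis.Analysis"
begin

definition smooth_convex_cdf :: "(real \<Rightarrow> real) \<Rightarrow> bool" where
  "smooth_convex_cdf F \<longleftrightarrow>
     mono F \<and> continuous_on UNIV F \<and>
     (\<forall>x\<le>0. F x = 0) \<and> (\<forall>x\<ge>1. F x = 1) \<and>
     (\<exists>f f'. (\<forall>x\<in>{0..1}. (F has_real_derivative f x) (at x within {0..1})) \<and>
             (\<forall>x\<in>{0..1}. (f has_real_derivative f' x) (at x within {0..1})) \<and>
             continuous_on {0..1} f' \<and>
             mono_on {0..1} f)"

definition levy_set :: "(real \<Rightarrow> real) \<Rightarrow> (real \<Rightarrow> real) \<Rightarrow> real set" where
  "levy_set F G = {e. 0 \<le> e \<and> (\<forall>v. F (v - e) - e \<le> G v \<and> G v \<le> F (v + e) + e)}"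

definition levy_dist :: "(real \<Rightarrow> real) \<Rightarrow> (real \<Rightarrow> real) \<Rightarrow> real" where
  "levy_dist F G = Inf (levy_set F G)"

text \<open>A deterministic adaptive algorithm with N queries is a pair (q, out): q maps the
  list of answers received so far to the next query point, out maps the full list of
  N answers to the hypothesis CDF.\<close>
definition perturbed_answers ::
  "real \<Rightarrow> (real \<Rightarrow> real) \<Rightarrow> nat \<Rightarrow> (real list \<Rightarrow> real) \<Rightarrow> real list \<Rightarrow> bool" where
  "perturbed_answers eps F N q as \<longleftrightarrow> length as = N \<and>
     (\<forall>i<N. \<exists>e1 e2. \<bar>e1\<bar> \<le> eps\<^sup>2 / 2 \<and> \<bar>e2\<bar> \<le> eps \<and>
                    as ! i = F (q (take i as) + e1) + e2)"

end

theory Submission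
  imports Defs
begin

text \<open>The shear x \<mapsto> x + F x turns the graph of F into the graph of an increasing 1-Lipschitz
  function shear_inv F, which is concave on [0, 2] because F is convex, and a sup-norm
  approximation of shear_inv F within \<delta> yields a CDF within Levy distance \<delta> of F.
  A perturbed query at x decides the comparison u \<le> x + F x up to eps + eps^2, so log(1/eps)
  queries locate shear_inv F u to within 3 eps by bisection.  The learner walks the dyadic
  subdivision of [0, 2] depth first, accepting a node when the estimates at its ends and midpoint
  are nearly collinear and splitting it otherwise.  By concavity the midpoint gaps on level j
  sum to at most 2^-(j+1), so at most 1/(2 sqrt eps) nodes are split per level and none below
  level log(1/eps); hence O(eps^(-1/2) log(1/eps)) rounds of O(log(1/eps)) queries suffice.\<close>

section \<open>Convexity of the CDF and its shear\<close>

lemma convex_on_Icc_if_mono_deriv: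
  fixes F f :: "real \<Rightarrow> real"
  assumes cont: "continuous_on {a..b} F"
    and deriv: "\<And>x. a < x \<Longrightarrow> x < b \<Longrightarrow> (F has_real_derivative f x) (at x)"
    and mono: "mono_on {a<..<b} f"
  shows "convex_on {a..b} F"
proof (rule convex_on_linorderI)
  have mvt: "\<exists>c\<in>{x<..<y}. F y - F x = (y - x) * f c" if "a \<le> x" "x < y" "y \<le> b" for x y
  proof -
    have "continuous_on {x..y} F" using cont that by (auto intro: continuous_on_subset)
    moreover have "F differentiable at z" if "x < z" "z < y" for z
      using deriv[of z] that \<open>a \<le> x\<close> \<open>y \<le> b\<close> real_differentiable_def by force
    ultimately obtain l c where c: "x < c" "c < y" "(F has_real_derivative l) (at c)"
      and l: "F y - F x = (y - x) * l"
      using MVT[OF \<open>x < y\<close>] by blast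
    have "l = f c" using DERIV_unique[OF c(3) deriv[of c]] c that by simp
    then show ?thesis using c l by auto
  qed
  fix t x y :: real
  assume t: "0 < t" "t < 1" and xy: "x \<in> {a..b}" "y \<in> {a..b}" "x < y"
  define z where "z = (1 - t) * x + t * y"
  have dz: "z - x = t * (y - x)" "y - z = (1 - t) * (y - x)" unfolding z_def by algebra+
  have "0 < z - x" "0 < y - z" unfolding dz using t xy by simp_all
  then have xz: "x < z" and zy: "z < y" by simp_all
  obtain c1 where c1: "c1 \<in> {x<..<z}" "F z - F x = (z - x) * f c1" using mvt[of x z] xy xz zy by auto
  obtain c2 where c2: "c2 \<in> {z<..<y}" "F y - F z = (y - z) * f c2" using mvt[of z y] xy xz zy by auto
  have "f c1 \<le> f c2" using c1 c2 xy by (intro mono_onD[OF mono]) auto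
  then have "t * (1 - t) * (y - x) * f c1 \<le> t * (1 - t) * (y - x) * f c2"
    using t xy by (intro mult_left_mono) auto
  then have "(1 - t) * (F z - F x) \<le> t * (F y - F z)"
    unfolding c1(2) c2(2) dz by (simp only: ac_simps)
  then show "F ((1 - t) *\<^sub>R x + t *\<^sub>R y) \<le> (1 - t) * F x + t * F y"
    unfolding z_def by (simp add: algebra_simps)
qed simp

lemma smooth_convex_cdfD:
  assumes "smooth_convex_cdf F"
  shows "mono F" "continuous_on UNIV F" "x \<le> 0 \<Longrightarrow> F x = 0" "1 \<le> x \<Longrightarrow> F x = 1"
  using assms unfolding smooth_convex_cdf_def by auto

lemma smooth_convex_cdf_bounds:
  assumes "smooth_convex_cdf F"
  shows "0 \<le> F x" "F x \<le> 1"
proof -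
  have "F (min x 0) \<le> F x" "F x \<le> F (max x 1)"
    using smooth_convex_cdfD(1)[OF assms] by (simp_all add: monoD)
  then show "0 \<le> F x" "F x \<le> 1" using smooth_convex_cdfD(3,4)[OF assms] by simp_all
qed

lemma smooth_convex_cdf_convex_on:
  assumes "smooth_convex_cdf F"
  shows "convex_on {0..1} F"
proof -
  obtain f where deriv: "\<forall>x\<in>{0..1}. (F has_real_derivative f x) (at x within {0..1})"
    and mono: "mono_on {0..1} f"
    using assms unfolding smooth_convex_cdf_def by blast
  show ?thesis
  proof (rule convex_on_Icc_if_mono_deriv)
    show "continuous_on {0..1} F"
      using smooth_convex_cdfD(2)[OF assms] by (rule continuous_on_subset) simp
    show "(F has_real_derivative f x) (at x)" if "0 < x" "x < 1" for x
    proof -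
      have "(F has_real_derivative f x) (at x within {0..1})" using deriv that by simp
      moreover have "x \<in> interior {0..1}" using that by simp
      ultimately show ?thesis by (metis at_within_interior)
    qed
    show "mono_on {0<..<1} f" using mono by (rule mono_on_subset) auto
  qed
qed

definition shear :: "(real \<Rightarrow> real) \<Rightarrow> real \<Rightarrow> real" where
  "shear F x = x + F x"

definition shear_inv :: "(real \<Rightarrow> real) \<Rightarrow> real \<Rightarrow> real" where
  "shear_inv F = inv (shear F)"

lemma strict_mono_shear:
  assumes "smooth_convex_cdf F"
  shows "strict_mono (shear F)"
proof
  fix x y :: real assume "x < y"
  moreover have "F x \<le> F y" using smooth_convex_cdfD(1)[OF assms] \<open>x < y\<close> by (simp add: monoD)
  ultimately show "shear F x < shear F y" unfolding shear_def by simp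
qed

lemma surj_shear:
  assumes "smooth_convex_cdf F"
  shows "surj (shear F)"
proof -
  have "\<exists>x. shear F x = u" for u
  proof -
    have "continuous_on {u - 1..u} (shear F)" unfolding shear_def
      using smooth_convex_cdfD(2)[OF assms]
      by (intro continuous_intros) (auto intro: continuous_on_subset)
    moreover have "shear F (u - 1) \<le> u" "u \<le> shear F u"
      unfolding shear_def using smooth_convex_cdf_bounds[OF assms] by auto
    ultimately show ?thesis using IVT'[of "shear F" "u - 1" u u] by auto
  qed
  then show ?thesis by (metis surjI)
qed

context
  fixes F :: "real \<Rightarrow> real"
  assumes F: "smooth_convex_cdf F"
begin

lemma shear_shear_inv [simp]: "shear F (shear_inv F u) = u"
  unfolding shear_inv_def by (rule surj_f_inv_f[OF surj_shear[OF F]])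

lemma shear_inv_shear [simp]: "shear_inv F (shear F x) = x"
  unfolding shear_inv_def by (rule inv_f_f[OF strict_mono_imp_inj_on[OF strict_mono_shear[OF F]]])

lemma le_shear_inv_iff: "x \<le> shear_inv F u \<longleftrightarrow> shear F x \<le> u"
  using strict_mono_less_eq[OF strict_mono_shear[OF F], of x "shear_inv F u"] by simp

lemma shear_inv_le_iff: "shear_inv F u \<le> x \<longleftrightarrow> u \<le> shear F x"
  using strict_mono_less_eq[OF strict_mono_shear[OF F], of "shear_inv F u" x] by simp

lemma shear_inv_mono: "u \<le> v \<Longrightarrow> shear_inv F u \<le> shear_inv F v"
  by (simp add: le_shear_inv_iff)

lemma shear_inv_diff_le: "u \<le> v \<Longrightarrow> shear_inv F v - shear_inv F u \<le> v - u"
  using shear_shear_inv[of u] shear_shear_inv[of v] shear_inv_mono[of u v]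
    smooth_convex_cdfD(1)[OF F]
  unfolding shear_def by (smt (verit) monoD)

lemma shear_inv_nonpos: "u \<le> 0 \<Longrightarrow> shear_inv F u = u"
  using shear_inv_shear[of u] smooth_convex_cdfD(3)[OF F] by (simp add: shear_def)

lemma shear_inv_ge_two: "2 \<le> u \<Longrightarrow> shear_inv F u = u - 1"
  using shear_inv_shear[of "u - 1"] smooth_convex_cdfD(4)[OF F, of "u - 1"] by (simp add: shear_def)

lemma shear_inv_bounds: "0 \<le> u \<Longrightarrow> u \<le> 2 \<Longrightarrow> 0 \<le> shear_inv F u \<and> shear_inv F u \<le> 1"
  using shear_inv_mono[of 0 u] shear_inv_mono[of u 2] shear_inv_nonpos[of 0] shear_inv_ge_two[of 2]
  by simp

lemma concave_on_shear_inv: "concave_on {0..2} (shear_inv F)"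
proof (rule concave_on_linorderI)
  fix t x y :: real
  assume t: "0 < t" "t < 1" and xy: "x \<in> {0..2}" "y \<in> {0..2}" "x < y"
  define X Y where "X = shear_inv F x" and "Y = shear_inv F y"
  have "F ((1 - t) * X + t * Y) \<le> (1 - t) * F X + t * F Y"
    using convex_onD[OF smooth_convex_cdf_convex_on[OF F], of t X Y] t xy shear_inv_bounds
    unfolding X_def Y_def by simp
  moreover have "x = X + F X" "y = Y + F Y"
    using shear_shear_inv[of x] shear_shear_inv[of y] unfolding X_def Y_def shear_def by simp_all
  ultimately have "shear F ((1 - t) * X + t * Y) \<le> (1 - t) * x + t * y"
    unfolding shear_def by (smt (verit) distrib_left)
  then show "(1 - t) * shear_inv F x + t * shear_inv F y \<le> shear_inv F ((1 - t) *\<^sub>R x + t *\<^sub>R y)"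
    using le_shear_inv_iff[of "(1 - t) * X + t * Y" "(1 - t) * x + t * y"]
    unfolding X_def Y_def by simp
qed simp

end

lemma levy_set_if_shear_inv_approx:
  assumes F: "smooth_convex_cdf F" and "0 \<le> \<delta>" and approx: "\<And>u. \<bar>Y u - shear_inv F u\<bar> \<le> \<delta>"
  shows "\<delta> \<in> levy_set F (\<lambda>v. Sup {u. Y u \<le> v} - v)"
  unfolding levy_set_def
proof (intro CollectI conjI allI \<open>0 \<le> \<delta>\<close>)
  fix v
  define S where "S = {u. Y u \<le> v}"
  have lower: "shear F (v - \<delta>) \<in> S"
    using approx[of "shear F (v - \<delta>)"] unfolding S_def by (simp add: F abs_le_iff)
  have upper: "u \<le> shear F (v + \<delta>)" if "u \<in> S" for u
    using approx[of u] that unfolding S_def by (simp add: shear_inv_le_iff[OF F, symmetric] abs_le_iff)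
  have "shear F (v - \<delta>) \<le> Sup S"
    using lower upper by (intro cSup_upper bdd_aboveI) auto
  moreover have "Sup S \<le> shear F (v + \<delta>)"
    using lower upper by (intro cSup_least) auto
  ultimately show "F (v - \<delta>) - \<delta> \<le> Sup {u. Y u \<le> v} - v" "Sup {u. Y u \<le> v} - v \<le> F (v + \<delta>) + \<delta>"
    unfolding S_def shear_def by simp_all
qed

lemma levy_dist_le:
  assumes "\<delta> \<in> levy_set F G"
  shows "levy_dist F G \<le> \<delta>"
  unfolding levy_dist_def
  using assms by (intro cInf_lower) (auto simp: levy_set_def bdd_below_def)

section \<open>Noisy bisection\<close>

text \<open>An answer a \<approx> F m at the midpoint m of the current interval decides whether
  u \<le> shear F m, i.e. on which side of m the point shear_inv F u lies.\<close>
definition bisect_step :: "real \<Rightarrow> real \<times> real \<Rightarrow> real \<Rightarrow> real \<times> real" where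
  "bisect_step u I a = (let m = (fst I + snd I) / 2 in if u \<le> m + a then (fst I, m) else (m, snd I))"

definition bisect :: "real \<Rightarrow> real list \<Rightarrow> real \<times> real" where
  "bisect u = foldl (bisect_step u) (0, 1)"

definition bisect_query :: "real \<Rightarrow> real list \<Rightarrow> real" where
  "bisect_query u as = (fst (bisect u as) + snd (bisect u as)) / 2"

lemma bisect_snoc: "bisect u (as @ [a]) = bisect_step u (bisect u as) a"
  unfolding bisect_def by simp

lemma perturbed_answersD:
  assumes "perturbed_answers eps F n q as"
  shows "length as = n"
    and "i < n \<Longrightarrow> \<exists>e1 e2. \<bar>e1\<bar> \<le> eps\<^sup>2 / 2 \<and> \<bar>e2\<bar> \<le> eps \<and> as ! i = F (q (take i as) + e1) + e2"
  using assms unfolding perturbed_answers_def by auto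

context
  fixes F :: "real \<Rightarrow> real"
  assumes F: "smooth_convex_cdf F"
begin

lemma noisy_comparison:
  assumes e: "\<bar>e1\<bar> \<le> eps\<^sup>2 / 2" "\<bar>e2\<bar> \<le> eps" and a: "a = F (m + e1) + e2"
  shows "u \<le> m + a \<Longrightarrow> shear_inv F u \<le> m + (eps + eps\<^sup>2)"
    and "m + a < u \<Longrightarrow> m - (eps + eps\<^sup>2) \<le> shear_inv F u"
proof -
  define g where "g = eps\<^sup>2 / 2 + eps"
  have g: "0 \<le> g" "\<bar>e1\<bar> + \<bar>e2\<bar> \<le> g" "\<bar>e1\<bar> + g \<le> eps + eps\<^sup>2" using e unfolding g_def by auto
  have shear_q: "shear F (m + e1) = m + a + e1 - e2" unfolding shear_def a by simp
  show "shear_inv F u \<le> m + (eps + eps\<^sup>2)" if "u \<le> m + a"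
  proof -
    have "u - g \<le> shear F (m + e1)" using shear_q that g by linarith
    then have "shear_inv F (u - g) \<le> m + e1" by (simp add: shear_inv_le_iff[OF F])
    moreover have "shear_inv F u - shear_inv F (u - g) \<le> g" using shear_inv_diff_le[OF F, of "u - g" u] g by simp
    ultimately show ?thesis using g by linarith
  qed
  show "m - (eps + eps\<^sup>2) \<le> shear_inv F u" if "m + a < u"
  proof -
    have "shear F (m + e1) \<le> u + g" using shear_q that g by linarith
    then have "m + e1 \<le> shear_inv F (u + g)" by (simp add: le_shear_inv_iff[OF F])
    moreover have "shear_inv F (u + g) - shear_inv F u \<le> g" using shear_inv_diff_le[OF F, of u "u + g"] g by simp
    ultimately show ?thesis using g by linarith
  qed
qed

lemma bisect_invariant:
  assumes ans: "perturbed_answers eps F n (bisect_query u) as" and u: "0 \<le> u" "u \<le> 2" and "0 \<le> eps"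
    and "s \<le> n"
  shows "snd (bisect u (take s as)) - fst (bisect u (take s as)) = 1 / 2 ^ s \<and>
    shear_inv F u \<le> snd (bisect u (take s as)) + (eps + eps\<^sup>2) \<and>
    fst (bisect u (take s as)) - (eps + eps\<^sup>2) \<le> shear_inv F u"
  using \<open>s \<le> n\<close>
proof (induction s)
  case 0
  have "0 \<le> eps + eps\<^sup>2" using \<open>0 \<le> eps\<close> by simp
  then show ?case using shear_inv_bounds[OF F u] by (simp add: bisect_def)
next
  case (Suc s)
  obtain e1 e2 where e: "\<bar>e1\<bar> \<le> eps\<^sup>2 / 2" "\<bar>e2\<bar> \<le> eps"
    and a: "as ! s = F (bisect_query u (take s as) + e1) + e2"
    using perturbed_answersD(2)[OF ans, of s] Suc.prems by auto
  define lo hi where "lo = fst (bisect u (take s as))" and "hi = snd (bisect u (take s as))"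
  have take_Suc: "take (Suc s) as = take s as @ [as ! s]"
    using perturbed_answersD(1)[OF ans] Suc.prems by (simp add: take_Suc_conv_app_nth)
  have step: "bisect u (take (Suc s) as) =
      (if u \<le> (lo + hi) / 2 + as ! s then (lo, (lo + hi) / 2) else ((lo + hi) / 2, hi))"
    unfolding take_Suc bisect_snoc bisect_step_def lo_def hi_def by simp
  have "bisect_query u (take s as) = (lo + hi) / 2" unfolding bisect_query_def lo_def hi_def ..
  note cmp = noisy_comparison[OF e a[unfolded this]]
  show ?case
    using Suc.IH Suc.prems cmp unfolding step lo_def[symmetric] hi_def[symmetric]
    by (auto simp: field_simps)
qed

lemma bisect_error:
  assumes ans: "perturbed_answers eps F n (bisect_query u) as" and u: "0 \<le> u" "u \<le> 2"
    and eps: "0 < eps" "eps < 1" and n: "1 / eps \<le> 2 ^ n"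
  shows "\<bar>fst (bisect u as) - shear_inv F u\<bar> \<le> 3 * eps"
proof -
  have "take n as = as" using perturbed_answersD(1)[OF ans] by simp
  then have inv: "snd (bisect u as) - fst (bisect u as) = 1 / 2 ^ n"
      "shear_inv F u \<le> snd (bisect u as) + (eps + eps\<^sup>2)"
      "fst (bisect u as) - (eps + eps\<^sup>2) \<le> shear_inv F u"
    using bisect_invariant[OF ans u, of n] eps by simp_all
  have "1 / 2 ^ n \<le> eps" using n eps by (simp add: field_simps)
  moreover have "eps\<^sup>2 \<le> eps" using eps by (simp add: power2_eq_square)
  ultimately show ?thesis using inv by (simp add: abs_le_iff)
qed

end

section \<open>Chords of concave functions\<close>

definition chord :: "real \<Rightarrow> real \<Rightarrow> real \<Rightarrow> real \<Rightarrow> real \<Rightarrow> real" where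
  "chord a b ya yb v = ((b - v) * ya + (v - a) * yb) / (b - a)"

definition midpoint_gap :: "(real \<Rightarrow> real) \<Rightarrow> real \<Rightarrow> real \<Rightarrow> real" where
  "midpoint_gap g a b = g ((a + b) / 2) - (g a + g b) / 2"

lemma chord_eq_affine:
  assumes "a < b"
  shows "chord a b ya yb v = ya + (yb - ya) / (b - a) * (v - a)"
  using assms unfolding chord_def by (simp add: field_simps)

lemma chord_diff_le:
  assumes "a < b" "v \<in> {a..b}" "\<bar>ya - za\<bar> \<le> \<delta>" "\<bar>yb - zb\<bar> \<le> \<delta>"
  shows "\<bar>chord a b ya yb v - chord a b za zb v\<bar> \<le> \<delta>"
proof -
  have "\<bar>(b - v) * (ya - za) + (v - a) * (yb - zb)\<bar> \<le> (b - v) * \<bar>ya - za\<bar> + (v - a) * \<bar>yb - zb\<bar>"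
    using assms(2) by (simp add: abs_mult abs_triangle_ineq order_trans[OF abs_triangle_ineq])
  also have "\<dots> \<le> (b - v) * \<delta> + (v - a) * \<delta>"
    using assms by (intro add_mono mult_left_mono) auto
  finally have "\<bar>(b - v) * (ya - za) + (v - a) * (yb - zb)\<bar> \<le> (b - a) * \<delta>"
    by (simp add: algebra_simps)
  then show ?thesis using \<open>a < b\<close>
    unfolding chord_def by (simp add: diff_divide_distrib[symmetric] abs_divide algebra_simps divide_le_eq)
qed

lemma chord_le_concave:
  assumes "concave_on {a..b} g" "a < b" "v \<in> {a..b}"
  shows "chord a b (g a) (g b) v \<le> g v"
  using concave_onD_Icc'[OF assms(1,3)] \<open>a < b\<close> unfolding chord_def by (simp add: field_simps)

lemma midpoint_gap_nonneg:
  assumes "concave_on {a..b} g" "a < b"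
  shows "0 \<le> midpoint_gap g a b"
  using concave_onD[OF assms(1), of "1 / 2" a b] \<open>a < b\<close>
  unfolding midpoint_gap_def by (simp add: add_divide_distrib)

lemma concave_deviation_le_twice:
  assumes conc: "concave_on {a..b} g" and "a < b" and v: "v \<in> {a..b}" and q: "q \<in> {a, b}"
    and t: "0 \<le> t" "t \<le> 1 / 2"
  defines "G \<equiv> \<lambda>w. g w - chord a b (g a) (g b) w"
  shows "G v \<le> 2 * G ((1 - t) * v + t * q)"
proof -
  define m where "m = (1 - t) * v + t * q"
  have "(1 - t) * g v + t * g q \<le> g m"
    using concave_onD[OF conc, of t v q] t q v \<open>a < b\<close> unfolding m_def by auto
  moreover have "chord a b (g a) (g b) m =
      (1 - t) * chord a b (g a) (g b) v + t * chord a b (g a) (g b) q"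
  proof -
    define s where "s = (g b - g a) / (b - a)"
    show ?thesis unfolding m_def chord_eq_affine[OF \<open>a < b\<close>] s_def[symmetric]
      by (simp add: algebra_simps)
  qed
  moreover have "chord a b (g a) (g b) q = g q" using q \<open>a < b\<close> unfolding chord_def by auto
  ultimately have "(1 - t) * G v \<le> G m" unfolding G_def by (simp add: algebra_simps)
  moreover have "1 / 2 * G v \<le> (1 - t) * G v"
    using chord_le_concave[OF conc \<open>a < b\<close> v] t unfolding G_def by (intro mult_right_mono) auto
  ultimately show ?thesis unfolding m_def by simp
qed

text \<open>The deviation from the chord is concave and vanishes at a and b; writing the midpoint as a
  convex combination of v and the farther endpoint puts weight at least 1/2 on v.\<close>
lemma concave_le_chord_plus_midpoint_gap:
  assumes conc: "concave_on {a..b} g" and "a < b" and v: "v \<in> {a..b}"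
  shows "g v \<le> chord a b (g a) (g b) v + 2 * midpoint_gap g a b"
proof -
  define m where "m = (a + b) / 2"
  have "midpoint_gap g a b = g m - chord a b (g a) (g b) m"
    unfolding m_def midpoint_gap_def chord_def using \<open>a < b\<close> by (simp add: field_simps)
  moreover have "g v - chord a b (g a) (g b) v \<le> 2 * (g m - chord a b (g a) (g b) m)"
  proof (cases "v \<le> m")
    case True
    define t where "t = (m - v) / (b - v)"
    have "v < b" using True \<open>a < b\<close> unfolding m_def by simp
    then have "t * (b - v) = m - v" unfolding t_def by simp
    then have "m = (1 - t) * v + t * b" by algebra
    moreover have "0 \<le> t" "t \<le> 1 / 2"
      using True v \<open>v < b\<close> unfolding t_def m_def by (simp_all add: field_simps)
    ultimately show ?thesis using concave_deviation_le_twice[OF conc \<open>a < b\<close> v, of b t] by simp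
  next
    case False
    define t where "t = (v - m) / (v - a)"
    have "a < v" using False \<open>a < b\<close> unfolding m_def by simp
    then have "t * (v - a) = v - m" unfolding t_def by simp
    then have "m = (1 - t) * v + t * a" by algebra
    moreover have "0 \<le> t" "t \<le> 1 / 2"
      using False v \<open>a < v\<close> unfolding t_def m_def by (simp_all add: field_simps)
    ultimately show ?thesis using concave_deviation_le_twice[OF conc \<open>a < b\<close> v, of a t] by simp
  qed
  ultimately show ?thesis by simp
qed

lemma concave_chord_estimate:
  assumes conc: "concave_on {a..b} g" and "a < b" and v: "v \<in> {a..b}"
    and ya: "\<bar>ya - g a\<bar> \<le> \<delta>" and ym: "\<bar>ym - g ((a + b) / 2)\<bar> \<le> \<delta>" and yb: "\<bar>yb - g b\<bar> \<le> \<delta>"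
    and flat: "ym - (ya + yb) / 2 \<le> \<theta>"
  shows "\<bar>g v - chord a b ya yb v\<bar> \<le> \<delta> + 2 * (\<theta> + 2 * \<delta>)"
proof -
  have "midpoint_gap g a b \<le> \<theta> + 2 * \<delta>"
    using ya ym yb flat unfolding midpoint_gap_def abs_le_iff add_divide_distrib by linarith
  then show ?thesis
    using chord_le_concave[OF conc \<open>a < b\<close> v] concave_le_chord_plus_midpoint_gap[OF conc \<open>a < b\<close> v]
      chord_diff_le[OF \<open>a < b\<close> v ya yb]
    unfolding abs_le_iff by (smt (verit))
qed

lemma sum_even_minus_odd_le:
  fixes D :: "nat \<Rightarrow> real"
  assumes "\<And>k. k < 2 * n \<Longrightarrow> D (Suc k) \<le> D k"
  shows "(\<Sum>i\<le>n. D (2 * i) - D (2 * i + 1)) \<le> D 0 - D (2 * n + 1)"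
  using assms
proof (induction n)
  case (Suc n)
  have "(\<Sum>i\<le>n. D (2 * i) - D (2 * i + 1)) \<le> D 0 - D (2 * n + 1)"
    using Suc.prems by (intro Suc.IH) simp
  moreover have "D (2 * n + 2) \<le> D (2 * n + 1)" using Suc.prems[of "2 * n + 1"] by simp
  ultimately show ?case by simp
qed simp

text \<open>Concavity makes the increments of g along the grid decrease, so the midpoint gaps of
  consecutive cells telescope to at most the first increment.\<close>
lemma sum_midpoint_gaps_le:
  fixes g :: "real \<Rightarrow> real"
  assumes conc: "concave_on {0..2 * real n * h} g" and "0 < h"
    and mono: "mono g" and lip: "\<And>x y. x \<le> y \<Longrightarrow> g y - g x \<le> y - x"
  shows "(\<Sum>i<n. midpoint_gap g (2 * real i * h) (2 * real (Suc i) * h)) \<le> h / 2"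
proof (cases n)
  case 0
  then show ?thesis using \<open>0 < h\<close> by simp
next
  case (Suc k)
  define D where "D l = g (real (Suc l) * h) - g (real l * h)" for l
  have gap: "midpoint_gap g (real l * h) (real (l + 2) * h) = (D l - D (Suc l)) / 2" for l
    unfolding midpoint_gap_def D_def by (simp add: algebra_simps add_divide_distrib)
  have "D (Suc l) \<le> D l" if "l < 2 * k" for l
  proof -
    have "concave_on {real l * h..real (l + 2) * h} g"
      unfolding concave_on_def using \<open>0 < h\<close> that Suc
      by (intro convex_on_subset[OF conc[unfolded concave_on_def]]) (auto simp: mult_right_mono)
    from midpoint_gap_nonneg[OF this] show ?thesis using \<open>0 < h\<close> gap[of l] by simp
  qed
  then have "(\<Sum>i\<le>k. D (2 * i) - D (2 * i + 1)) \<le> D 0 - D (2 * k + 1)"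
    by (rule sum_even_minus_odd_le)
  moreover have "D 0 \<le> h" "0 \<le> D (2 * k + 1)"
    using lip[of 0 h] \<open>0 < h\<close> monoD[OF mono, of "real (2 * k + 1) * h" "real (2 * k + 2) * h"]
    unfolding D_def by simp_all
  moreover have "(\<Sum>i<n. midpoint_gap g (2 * real i * h) (2 * real (Suc i) * h)) =
      (\<Sum>i\<le>k. D (2 * i) - D (2 * i + 1)) / 2"
    unfolding Suc lessThan_Suc_atMost sum_divide_distrib
    by (intro sum.cong refl) (use gap[of "2 * _"] in \<open>simp add: mult.assoc\<close>)
  ultimately show ?thesis by simp
qed

section \<open>Dyadic nodes\<close>

definition dyadic_pt :: "nat \<Rightarrow> nat \<Rightarrow> nat \<Rightarrow> real" where
  "dyadic_pt j i e = real (2 * i + e) / 2 ^ j"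

lemma dyadic_pt_mid: "dyadic_pt j i 1 = (dyadic_pt j i 0 + dyadic_pt j i 2) / 2"
  and dyadic_pt_less: "dyadic_pt j i 0 < dyadic_pt j i 2"
  and dyadic_pt_left_child: "dyadic_pt (Suc j) (2 * i) 0 = dyadic_pt j i 0"
  unfolding dyadic_pt_def by (simp_all add: field_simps)

lemma dyadic_pt_bounds:
  assumes "i < 2 ^ j" "e \<le> 2"
  shows "0 \<le> dyadic_pt j i e" "dyadic_pt j i e \<le> 2"
proof -
  have "2 * i + e \<le> 2 * 2 ^ j" using assms by linarith
  then have "real (2 * i + e) \<le> real (2 * 2 ^ j)" by (simp only: of_nat_le_iff)
  then show "dyadic_pt j i e \<le> 2" unfolding dyadic_pt_def by (simp add: divide_le_eq del: of_nat_add)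
qed (simp add: dyadic_pt_def)

definition large_gap_nodes :: "(real \<Rightarrow> real) \<Rightarrow> real \<Rightarrow> (nat \<times> nat) set" where
  "large_gap_nodes F c =
     {(j, i). i < 2 ^ j \<and> c < midpoint_gap (shear_inv F) (dyadic_pt j i 0) (dyadic_pt j i 2)}"

context
  fixes F :: "real \<Rightarrow> real"
  assumes F: "smooth_convex_cdf F"
begin

lemma node_gap_nonneg:
  assumes "i < 2 ^ j"
  shows "0 \<le> midpoint_gap (shear_inv F) (dyadic_pt j i 0) (dyadic_pt j i 2)"
proof (rule midpoint_gap_nonneg[OF _ dyadic_pt_less])
  show "concave_on {dyadic_pt j i 0..dyadic_pt j i 2} (shear_inv F)"
    using concave_on_shear_inv[OF F] dyadic_pt_bounds[OF assms]
    unfolding concave_on_def by (elim convex_on_subset) auto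
qed

lemma level_gap_sum_le:
  "(\<Sum>i<2 ^ j. midpoint_gap (shear_inv F) (dyadic_pt j i 0) (dyadic_pt j i 2)) \<le> 1 / (2 * 2 ^ j)"
proof -
  have "2 * real (2 ^ j) * (1 / 2 ^ j) = (2 :: real)" by simp
  then have "concave_on {0..2 * real (2 ^ j) * (1 / 2 ^ j)} (shear_inv F)"
    using concave_on_shear_inv[OF F] by simp
  from sum_midpoint_gaps_le[OF this _ _ shear_inv_diff_le[OF F]]
  show ?thesis
    unfolding dyadic_pt_def using shear_inv_mono[OF F] by (simp add: mono_def)
qed

lemma card_large_gaps_level:
  assumes "0 < eps"
  shows "real (card {i. i < 2 ^ j \<and> 6 * eps < midpoint_gap (shear_inv F) (dyadic_pt j i 0) (dyadic_pt j i 2)})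
    \<le> 1 / (2 * sqrt eps)"
    (is "real (card ?S) \<le> _")
proof -
  define c where "c = real (card ?S)"
  have S: "?S \<subseteq> {..<2 ^ j}" "finite ?S" by (auto intro: finite_subset)
  have card: "c \<le> 2 ^ j" unfolding c_def using card_mono[OF _ S(1)] by (simp flip: of_nat_power)
  have "c * (6 * eps) = (\<Sum>i\<in>?S. 6 * eps)" unfolding c_def by simp
  also have "\<dots> \<le> (\<Sum>i\<in>?S. midpoint_gap (shear_inv F) (dyadic_pt j i 0) (dyadic_pt j i 2))"
    by (intro sum_mono) auto
  also have "\<dots> \<le> (\<Sum>i<2 ^ j. midpoint_gap (shear_inv F) (dyadic_pt j i 0) (dyadic_pt j i 2))"
    using S node_gap_nonneg by (intro sum_mono2) auto
  also have "\<dots> \<le> 1 / (2 * 2 ^ j)" by (rule level_gap_sum_le)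
  finally have "c * (c * (6 * eps)) \<le> 2 ^ j * (1 / (2 * 2 ^ j))"
    using card assms by (intro mult_mono) (auto simp: c_def)
  moreover have "(2 * sqrt eps * c) ^ 2 = 4 * (c * (c * eps))"
    using assms by (simp add: power_mult_distrib power2_eq_square)
  ultimately have "(2 * sqrt eps * c) ^ 2 \<le> 1 ^ 2" by simp
  then have "2 * sqrt eps * c \<le> 1" by (rule power2_le_imp_le) simp
  then show ?thesis unfolding c_def using assms by (simp add: field_simps)
qed

lemma large_gaps_level_empty:
  assumes "1 / (2 * 2 ^ j) \<le> c"
  shows "{i. i < 2 ^ j \<and> c < midpoint_gap (shear_inv F) (dyadic_pt j i 0) (dyadic_pt j i 2)} = {}"
proof -
  have "midpoint_gap (shear_inv F) (dyadic_pt j i 0) (dyadic_pt j i 2) \<le> 1 / (2 * 2 ^ j)" if "i < 2 ^ j" for i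
    using level_gap_sum_le[of j] node_gap_nonneg that
    by (elim order_trans[rotated]) (intro member_le_sum, auto)
  then show ?thesis using assms by force
qed

lemma card_large_gap_nodes:
  assumes eps: "0 < eps" and L: "1 / eps \<le> 2 ^ L"
  shows "finite (large_gap_nodes F (6 * eps))"
    and "real (card (large_gap_nodes F (6 * eps))) \<le> real L / (2 * sqrt eps)"
proof -
  define S where "S j = {i. i < 2 ^ j \<and> 6 * eps < midpoint_gap (shear_inv F) (dyadic_pt j i 0) (dyadic_pt j i 2)}" for j
  have empty: "S j = {}" if "L \<le> j" for j
  proof -
    have "(2 :: real) ^ L \<le> 2 ^ j" using that by (intro power_increasing) auto
    moreover have "1 \<le> eps * 2 ^ L" using L eps by (simp add: field_simps)
    ultimately have "1 \<le> eps * 2 ^ j" using eps by (smt (verit) mult_left_mono)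
    then have "1 / (2 * 2 ^ j) \<le> 6 * eps" by (simp add: field_simps)
    then show ?thesis unfolding S_def by (rule large_gaps_level_empty)
  qed
  have sub: "large_gap_nodes F (6 * eps) \<subseteq> (\<Union>j<L. Pair j ` S j)"
  proof
    fix x assume "x \<in> large_gap_nodes F (6 * eps)"
    then obtain j i where x: "x = (j, i)" "i \<in> S j" unfolding large_gap_nodes_def S_def by auto
    then have "j < L" using empty[of j] by (cases "L \<le> j") auto
    then show "x \<in> (\<Union>j<L. Pair j ` S j)" using x by auto
  qed
  have fin: "finite (S j)" for j unfolding S_def by (rule finite_subset[of _ "{..<2 ^ j}"]) auto
  then have fin_union: "finite (\<Union>j<L. Pair j ` S j)" by simp
  then show "finite (large_gap_nodes F (6 * eps))" using sub by (rule finite_subset[rotated])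
  have level: "real (card (S j)) \<le> 1 / (2 * sqrt eps)" for j
    unfolding S_def by (rule card_large_gaps_level[OF eps])
  have "card (large_gap_nodes F (6 * eps)) \<le> card (\<Union>j<L. Pair j ` S j)"
    by (rule card_mono[OF fin_union sub])
  also have "\<dots> \<le> (\<Sum>j<L. card (Pair j ` S j))" by (rule card_UN_le) simp
  also have "\<dots> = (\<Sum>j<L. card (S j))" by (intro sum.cong refl card_image) (simp add: inj_on_def)
  finally have "real (card (large_gap_nodes F (6 * eps))) \<le> (\<Sum>j<L. real (card (S j)))"
    by (simp flip: of_nat_sum)
  also have "\<dots> \<le> real L / (2 * sqrt eps)" using sum_mono[of "{..<L}", OF level] by simp
  finally show "real (card (large_gap_nodes F (6 * eps))) \<le> real L / (2 * sqrt eps)" .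
qed

end

text \<open>The node following the subtree of node (j, i) in depth-first order: climb while the
  node is a right child, then step to the right sibling.\<close>
fun dfs_next :: "nat \<Rightarrow> nat \<Rightarrow> (nat \<times> nat) option" where
  "dfs_next 0 i = None"
| "dfs_next (Suc j) i = (if even i then Some (Suc j, Suc i) else dfs_next j (i div 2))"

definition ancestors :: "nat \<Rightarrow> nat \<Rightarrow> (nat \<times> nat) set" where
  "ancestors j i = {(k, i div 2 ^ (j - k)) | k. k < j}"

lemma ancestors_left_child: "ancestors (Suc j) (2 * i) = insert (j, i) (ancestors j i)"
proof -
  have "2 * i div 2 ^ (Suc j - k) = i div 2 ^ (j - k)" if "k < j" for k
    using that by (simp add: Suc_diff_le div_mult2_eq)
  then show ?thesis unfolding ancestors_def by (auto simp: less_Suc_eq)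
qed

definition child_nodes :: "(nat \<times> nat) set \<Rightarrow> (nat \<times> nat) set" where
  "child_nodes A = (\<lambda>((j, i), b). (Suc j, 2 * i + b)) ` (A \<times> {0, 1})"

lemma finite_child_nodes: "finite A \<Longrightarrow> finite (child_nodes A)"
  unfolding child_nodes_def by simp

lemma card_child_nodes_le: "finite A \<Longrightarrow> card (child_nodes A) \<le> 2 * card A"
  unfolding child_nodes_def
  using card_image_le[of "A \<times> {0, 1 :: nat}" "\<lambda>((j, i), b). (Suc j, 2 * i + b)"]
  by (simp add: card_cartesian_product mult_2)

lemma node_in_child_nodes:
  assumes "i < 2 ^ j" "ancestors j i \<subseteq> A"
  shows "(j, i) \<in> insert (0, 0) (child_nodes A)"
proof (cases j)
  case (Suc k)
  then have "(k, i div 2) \<in> A" using assms(2) unfolding ancestors_def by auto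
  moreover have "i = 2 * (i div 2) + i mod 2" "i mod 2 \<in> {0, 1}" by auto
  ultimately show ?thesis
    unfolding Suc child_nodes_def by (intro insertI2 image_eqI[of _ _ "((k, i div 2), i mod 2)"]) auto
qed (use assms(1) in simp)

lemma dfs_next_Some:
  "i < 2 ^ j \<Longrightarrow> dfs_next j i = Some (j', i') \<Longrightarrow>
    i' < 2 ^ j' \<and> ancestors j' i' \<subseteq> ancestors j i \<and> dyadic_pt j' i' 0 = dyadic_pt j i 2"
proof (induction j i rule: dfs_next.induct)
  case (2 j i)
  show ?case
  proof (cases "even i")
    case True
    then have new: "j' = Suc j" "i' = Suc i" using "2.prems" by auto
    have "Suc i \<noteq> 2 ^ Suc j" using True by (metis dvd_power even_Suc zero_less_Suc)
    then have "Suc i < 2 ^ Suc j" using "2.prems"(1) by simp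
    moreover have "Suc i div 2 ^ (Suc j - k) = i div 2 ^ (Suc j - k)" if "k < Suc j" for k
    proof -
      have "Suc i div 2 = i div 2" using True by presburger
      then show ?thesis using that by (simp add: Suc_diff_le div_mult2_eq)
    qed
    ultimately show ?thesis
      using new unfolding ancestors_def dyadic_pt_def by (auto simp: field_simps)
  next
    case False
    then have IH: "i' < 2 ^ j' \<and> ancestors j' i' \<subseteq> ancestors j (i div 2) \<and>
        dyadic_pt j' i' 0 = dyadic_pt j (i div 2) 2"
      using "2.IH" "2.prems" by simp
    have "ancestors j (i div 2) \<subseteq> ancestors (Suc j) i"
      unfolding ancestors_def by (auto simp: Suc_diff_le div_mult2_eq)
    moreover have "dyadic_pt j (i div 2) 2 = dyadic_pt (Suc j) i 2"
    proof -
      have "2 * i + 2 = 2 * (2 * (i div 2) + 2)" using False by presburger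
      then show ?thesis unfolding dyadic_pt_def by (simp add: field_simps)
    qed
    ultimately show ?thesis using IH by auto
  qed
qed simp

lemma dfs_next_None: "i < 2 ^ j \<Longrightarrow> dfs_next j i = None \<Longrightarrow> dyadic_pt j i 2 = 2"
proof (induction j i rule: dfs_next.induct)
  case (2 j i)
  then have "odd i" "dyadic_pt j (i div 2) 2 = 2" by (auto split: if_splits)
  moreover have "2 * i + 2 = 2 * (2 * (i div 2) + 2)" using \<open>odd i\<close> by presburger
  ultimately show ?case unfolding dyadic_pt_def by (simp add: field_simps)
qed (simp add: dyadic_pt_def)

section \<open>The learner\<close>

type_synonym piece = "real \<times> real \<times> real \<times> real"

definition piece_covers :: "piece \<Rightarrow> real \<Rightarrow> bool" where
  "piece_covers p u = (case p of (a, b, _, _) \<Rightarrow> a \<le> u \<and> u \<le> b)"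

definition piece_eval :: "piece \<Rightarrow> real \<Rightarrow> real" where
  "piece_eval p u = (case p of (a, b, ya, yb) \<Rightarrow> chord a b ya yb u)"

definition piecewise_estimate :: "piece list \<Rightarrow> real \<Rightarrow> real" where
  "piecewise_estimate ps u =
     (if u \<le> 0 then u else if 2 \<le> u then u - 1
      else if \<exists>p\<in>set ps. piece_covers p u then piece_eval (SOME p. p \<in> set ps \<and> piece_covers p u) u
      else 0)"

text \<open>The CDF G with shear_inv G = Y is recovered as v \<mapsto> sup {u. Y u \<le> v} - v.\<close>
definition learn_output :: "piece list \<Rightarrow> real \<Rightarrow> real" where
  "learn_output ps v = Sup {u. piecewise_estimate ps u \<le> v} - v"

definition node_estimate :: "nat \<Rightarrow> nat \<Rightarrow> nat \<Rightarrow> nat \<Rightarrow> real list \<Rightarrow> real" where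
  "node_estimate L j i e blk = fst (bisect (dyadic_pt j i e) (take L (drop (L * e) blk)))"

type_synonym learn_state = "(nat \<times> nat) option \<times> piece list"

definition learn_step :: "nat \<Rightarrow> real \<Rightarrow> learn_state \<Rightarrow> real list \<Rightarrow> learn_state" where
  "learn_step L \<theta> st blk = (case fst st of None \<Rightarrow> st | Some (j, i) \<Rightarrow>
     (let ya = node_estimate L j i 0 blk; ym = node_estimate L j i 1 blk; yb = node_estimate L j i 2 blk
      in if \<theta> < ym - (ya + yb) / 2 then (Some (Suc j, 2 * i), snd st)
         else (dfs_next j i, snd st @ [(dyadic_pt j i 0, dyadic_pt j i 2, ya, yb)])))"

text \<open>Round t consumes the answers with indices in [3 L t, 3 L (t + 1)): three bisections of
  length L locating the shear inverse at the left end, the midpoint and the right end of the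
  current node.\<close>
fun learn_run :: "nat \<Rightarrow> real \<Rightarrow> nat \<Rightarrow> real list \<Rightarrow> learn_state" where
  "learn_run L \<theta> 0 as = (Some (0, 0), [])"
| "learn_run L \<theta> (Suc t) as = learn_step L \<theta> (learn_run L \<theta> t as) (take (3 * L) (drop (3 * L * t) as))"

definition learn_query :: "nat \<Rightarrow> real \<Rightarrow> real list \<Rightarrow> real" where
  "learn_query L \<theta> pre = (let n = length pre; t = n div (3 * L); e = n mod (3 * L) div L in
     case fst (learn_run L \<theta> t pre) of None \<Rightarrow> 0
     | Some (j, i) \<Rightarrow> bisect_query (dyadic_pt j i e) (drop (3 * L * t + L * e) pre))"

lemma learn_run_prefix:
  "take (3 * L * t) xs = take (3 * L * t) ys \<Longrightarrow> learn_run L \<theta> t xs = learn_run L \<theta> t ys"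
proof (induction t)
  case (Suc t)
  have "3 * L * t \<le> 3 * L * Suc t" by simp
  then have "take (3 * L * t) xs = take (3 * L * t) ys"
    using Suc.prems by (metis min.absorb1 take_take)
  moreover have "take (3 * L) (drop (3 * L * t) xs) = take (3 * L) (drop (3 * L * t) ys)"
    using Suc.prems by (simp add: take_drop add.commute)
  ultimately show ?case using Suc.IH by simp
qed simp

lemma learn_query_in_block:
  assumes "s < L" "e \<le> 2" "length pre = 3 * L * t + L * e + s"
  shows "learn_query L \<theta> pre = (case fst (learn_run L \<theta> t pre) of None \<Rightarrow> 0
     | Some (j, i) \<Rightarrow> bisect_query (dyadic_pt j i e) (drop (3 * L * t + L * e) pre))"
proof -
  have "L * e \<le> L * 2" using assms(2) by (rule mult_le_mono2)
  then have "L * e + s < 3 * L" using assms(1) by linarith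
  then have t: "length pre div (3 * L) = t" and "length pre mod (3 * L) = L * e + s"
    using assms(3) by (simp_all add: add.assoc)
  then have e: "length pre mod (3 * L) div L = e" using \<open>s < L\<close> by simp
  show ?thesis unfolding learn_query_def Let_def t e ..
qed

section \<open>Correctness of the learner\<close>

fun frontier :: "(nat \<times> nat) option \<Rightarrow> real" where
  "frontier None = 2"
| "frontier (Some (j, i)) = dyadic_pt j i 0"

definition piece_accurate :: "(real \<Rightarrow> real) \<Rightarrow> real \<Rightarrow> piece \<Rightarrow> bool" where
  "piece_accurate F \<delta> p \<longleftrightarrow> (\<forall>u. piece_covers p u \<longrightarrow> \<bar>shear_inv F u - piece_eval p u\<bar> \<le> \<delta>)"

text \<open>The accuracy 39 eps = 3 eps + 2 (12 eps + 2 * 3 eps) is the bisection error plus twice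
  the largest midpoint gap of an accepted node.\<close>
definition learn_inv :: "(real \<Rightarrow> real) \<Rightarrow> real \<Rightarrow> learn_state \<Rightarrow> bool" where
  "learn_inv F eps st \<longleftrightarrow>
     (\<forall>p\<in>set (snd st). piece_accurate F (39 * eps) p) \<and>
     (\<forall>u. 0 < u \<and> u \<le> frontier (fst st) \<longrightarrow> (\<exists>p\<in>set (snd st). piece_covers p u)) \<and>
     (\<forall>j i. fst st = Some (j, i) \<longrightarrow> i < 2 ^ j \<and> ancestors j i \<subseteq> large_gap_nodes F (6 * eps))"

definition dfs_before :: "nat \<times> nat \<Rightarrow> nat \<times> nat \<Rightarrow> bool" where
  "dfs_before x y \<longleftrightarrow> dyadic_pt (fst x) (snd x) 0 < dyadic_pt (fst y) (snd y) 0 \<or>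
     (dyadic_pt (fst x) (snd x) 0 = dyadic_pt (fst y) (snd y) 0 \<and> fst x < fst y)"

lemma dfs_before_trans: "dfs_before x y \<Longrightarrow> dfs_before y z \<Longrightarrow> dfs_before x z"
  and dfs_before_irrefl: "\<not> dfs_before x x"
  unfolding dfs_before_def by auto

lemma learn_inv_init: "learn_inv F eps (Some (0, 0), [])"
  unfolding learn_inv_def ancestors_def by (simp add: dyadic_pt_def)

lemma learn_inv_descend:
  assumes "learn_inv F eps (Some (j, i), ps)" "(j, i) \<in> large_gap_nodes F (6 * eps)"
  shows "learn_inv F eps (Some (Suc j, 2 * i), ps)"
  using assms unfolding learn_inv_def by (simp add: dyadic_pt_left_child ancestors_left_child)

lemma learn_inv_accept:
  assumes inv: "learn_inv F eps (Some (j, i), ps)"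
    and acc: "piece_accurate F (39 * eps) (dyadic_pt j i 0, dyadic_pt j i 2, ya, yb)"
  shows "learn_inv F eps (dfs_next j i, ps @ [(dyadic_pt j i 0, dyadic_pt j i 2, ya, yb)])"
proof -
  have i: "i < 2 ^ j" and anc: "ancestors j i \<subseteq> large_gap_nodes F (6 * eps)"
    and cover: "\<And>u. 0 < u \<Longrightarrow> u \<le> dyadic_pt j i 0 \<Longrightarrow> \<exists>p\<in>set ps. piece_covers p u"
    using inv unfolding learn_inv_def by auto
  have "frontier (dfs_next j i) = dyadic_pt j i 2"
    using dfs_next_Some[OF i] dfs_next_None[OF i] by (cases "dfs_next j i") auto
  moreover have "\<forall>j' i'. dfs_next j i = Some (j', i') \<longrightarrow>
      i' < 2 ^ j' \<and> ancestors j' i' \<subseteq> large_gap_nodes F (6 * eps)"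
    using dfs_next_Some[OF i] anc by blast
  ultimately show ?thesis
    using inv acc cover unfolding learn_inv_def by (auto simp: piece_covers_def not_le)
qed

lemma large_gap_node_if_estimates:
  assumes "i < 2 ^ j" and "\<bar>ya - shear_inv F (dyadic_pt j i 0)\<bar> \<le> 3 * eps"
    and "\<bar>ym - shear_inv F (dyadic_pt j i 1)\<bar> \<le> 3 * eps" and "\<bar>yb - shear_inv F (dyadic_pt j i 2)\<bar> \<le> 3 * eps"
    and "12 * eps < ym - (ya + yb) / 2"
  shows "(j, i) \<in> large_gap_nodes F (6 * eps)"
proof -
  have "6 * eps < midpoint_gap (shear_inv F) (dyadic_pt j i 0) (dyadic_pt j i 2)"
    using assms(2-5) unfolding midpoint_gap_def dyadic_pt_mid abs_le_iff add_divide_distrib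
    by linarith
  then show ?thesis using \<open>i < 2 ^ j\<close> unfolding large_gap_nodes_def by simp
qed

lemma piece_accurate_if_estimates:
  assumes F: "smooth_convex_cdf F" and i: "i < 2 ^ j"
    and err: "\<bar>ya - shear_inv F (dyadic_pt j i 0)\<bar> \<le> 3 * eps"
      "\<bar>ym - shear_inv F (dyadic_pt j i 1)\<bar> \<le> 3 * eps" "\<bar>yb - shear_inv F (dyadic_pt j i 2)\<bar> \<le> 3 * eps"
    and flat: "ym - (ya + yb) / 2 \<le> 12 * eps"
  shows "piece_accurate F (39 * eps) (dyadic_pt j i 0, dyadic_pt j i 2, ya, yb)"
proof -
  have "concave_on {dyadic_pt j i 0..dyadic_pt j i 2} (shear_inv F)"
    using concave_on_shear_inv[OF F] dyadic_pt_bounds[OF i]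
    unfolding concave_on_def by (elim convex_on_subset) auto
  from concave_chord_estimate[OF this dyadic_pt_less _ err(1) err(2)[unfolded dyadic_pt_mid] err(3) flat]
  show ?thesis
    unfolding piece_accurate_def piece_covers_def piece_eval_def by (simp add: abs_minus_commute)
qed

locale learner_run =
  fixes eps :: real and F :: "real \<Rightarrow> real" and as :: "real list" and L T :: nat
  assumes F: "smooth_convex_cdf F" and eps: "0 < eps" "eps < 1" and L: "1 / eps \<le> 2 ^ L"
    and answers: "perturbed_answers eps F (3 * L * T) (learn_query L (12 * eps)) as"
begin

abbreviation state :: "nat \<Rightarrow> learn_state" where
  "state t \<equiv> learn_run L (12 * eps) t as"

lemma block_answers:
  assumes t: "t < T" and node: "fst (state t) = Some (j, i)" and "e \<le> 2"
  shows "perturbed_answers eps F L (bisect_query (dyadic_pt j i e))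
    (take L (drop (L * e) (take (3 * L) (drop (3 * L * t) as))))"
proof -
  define p where "p = 3 * L * t + L * e"
  have "L * e \<le> L * 2" using \<open>e \<le> 2\<close> by (rule mult_le_mono2)
  moreover have "3 * L * t + 3 * L \<le> 3 * L * T" using mult_le_mono2[of "Suc t" T "3 * L"] t by simp
  ultimately have pL: "p + L \<le> 3 * L * T" "L * e + L \<le> 3 * L" unfolding p_def by linarith+
  have len: "length as = 3 * L * T" by (rule perturbed_answersD(1)[OF answers])
  have blk: "take L (drop (L * e) (take (3 * L) (drop (3 * L * t) as))) = take L (drop p as)"
  proof -
    have "min L (3 * L - L * e) = L" using pL(2) by linarith
    then show ?thesis unfolding p_def by (simp add: drop_take take_take add.commute)
  qed
  have "\<exists>e1 e2. \<bar>e1\<bar> \<le> eps\<^sup>2 / 2 \<and> \<bar>e2\<bar> \<le> eps \<and>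
      take L (drop p as) ! s = F (bisect_query (dyadic_pt j i e) (take s (take L (drop p as))) + e1) + e2"
    if s: "s < L" for s
  proof -
    have "p + s < 3 * L * T" using pL s by linarith
    from perturbed_answersD(2)[OF answers this] obtain e1 e2 where
      e: "\<bar>e1\<bar> \<le> eps\<^sup>2 / 2" "\<bar>e2\<bar> \<le> eps"
      and a: "as ! (p + s) = F (learn_query L (12 * eps) (take (p + s) as) + e1) + e2" by blast
    have "learn_run L (12 * eps) t (take (p + s) as) = state t"
      by (rule learn_run_prefix) (simp add: p_def min.absorb1)
    then have "learn_query L (12 * eps) (take (p + s) as) =
        bisect_query (dyadic_pt j i e) (drop p (take (p + s) as))"
      using learn_query_in_block[OF s \<open>e \<le> 2\<close>, of "take (p + s) as" t] node len pL s
      unfolding p_def by simp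
    moreover have "drop p (take (p + s) as) = take s (take L (drop p as))"
      using s by (simp add: drop_take take_take min.absorb1)
    moreover have "take L (drop p as) ! s = as ! (p + s)" using s pL len by simp
    ultimately show ?thesis using e a by auto
  qed
  then show ?thesis unfolding blk perturbed_answers_def using pL len by simp
qed

lemma node_estimate_error:
  assumes "t < T" "fst (state t) = Some (j, i)" "i < 2 ^ j" "e \<le> 2"
  shows "\<bar>node_estimate L j i e (take (3 * L) (drop (3 * L * t) as)) - shear_inv F (dyadic_pt j i e)\<bar> \<le> 3 * eps"
  unfolding node_estimate_def
  using bisect_error[OF F block_answers[OF assms(1,2,4)] dyadic_pt_bounds[OF assms(3,4)] eps L] .

lemma learn_step_node:
  assumes t: "t < T" and inv: "learn_inv F eps (state t)" and node: "fst (state t) = Some (j, i)"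
  shows "learn_inv F eps (state (Suc t)) \<and> (\<forall>y. fst (state (Suc t)) = Some y \<longrightarrow> dfs_before (j, i) y)"
proof -
  obtain ps where st: "state t = (Some (j, i), ps)" using node by (cases "state t") auto
  have i: "i < 2 ^ j" using inv node unfolding learn_inv_def by simp
  define blk where "blk = take (3 * L) (drop (3 * L * t) as)"
  define ya ym yb where "ya = node_estimate L j i 0 blk" and "ym = node_estimate L j i 1 blk"
    and "yb = node_estimate L j i 2 blk"
  have err: "\<bar>ya - shear_inv F (dyadic_pt j i 0)\<bar> \<le> 3 * eps"
    "\<bar>ym - shear_inv F (dyadic_pt j i 1)\<bar> \<le> 3 * eps" "\<bar>yb - shear_inv F (dyadic_pt j i 2)\<bar> \<le> 3 * eps"
    using node_estimate_error[OF t node i] unfolding ya_def ym_def yb_def blk_def by simp_all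
  have step: "state (Suc t) = (if 12 * eps < ym - (ya + yb) / 2 then (Some (Suc j, 2 * i), ps)
      else (dfs_next j i, ps @ [(dyadic_pt j i 0, dyadic_pt j i 2, ya, yb)]))"
    unfolding ya_def ym_def yb_def blk_def by (simp add: st learn_step_def)
  show ?thesis
  proof (cases "12 * eps < ym - (ya + yb) / 2")
    case True
    with large_gap_node_if_estimates[OF i err] show ?thesis
      using learn_inv_descend[OF inv[unfolded st]] step
      unfolding dfs_before_def by (simp add: dyadic_pt_left_child)
  next
    case False
    then have "piece_accurate F (39 * eps) (dyadic_pt j i 0, dyadic_pt j i 2, ya, yb)"
      by (intro piece_accurate_if_estimates[OF F i err]) simp
    moreover have "dyadic_pt j' i' 0 = dyadic_pt j i 2" if "dfs_next j i = Some (j', i')" for j' i'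
      using dfs_next_Some[OF i that] by simp
    ultimately show ?thesis
      using learn_inv_accept[OF inv[unfolded st]] step False dyadic_pt_less[of j i]
      unfolding dfs_before_def by auto
  qed
qed

lemma learn_step_inv:
  assumes "t < T" and inv: "learn_inv F eps (state t)"
  shows "learn_inv F eps (state (Suc t))"
    and "fst (state t) = Some x \<Longrightarrow> fst (state (Suc t)) = Some y \<Longrightarrow> dfs_before x y"
proof -
  show "learn_inv F eps (state (Suc t))"
  proof (cases "fst (state t)")
    case None
    then show ?thesis using inv by (simp add: learn_step_def)
  qed (use learn_step_node[OF assms] in force)
  show "dfs_before x y" if "fst (state t) = Some x" "fst (state (Suc t)) = Some y"
    using learn_step_node[OF assms, of "fst x" "snd x"] that by (cases x; cases y) auto
qed

lemma learn_inv_state: "t \<le> T \<Longrightarrow> learn_inv F eps (state t)"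
proof (induction t)
  case (Suc t)
  then show ?case using learn_step_inv(1)[of t] by (simp del: learn_run.simps)
qed (simp add: learn_inv_init)

lemma state_done_stays: "t \<le> t' \<Longrightarrow> fst (state t) = None \<Longrightarrow> fst (state t') = None"
  by (induction t' rule: dec_induct) (simp_all add: learn_step_def)

lemma visited_nodes_increase:
  assumes running: "fst (state T) \<noteq> None" and "t \<le> T"
  shows "s < t \<Longrightarrow> dfs_before (the (fst (state s))) (the (fst (state t)))"
  using \<open>t \<le> T\<close>
proof (induction t)
  case (Suc t)
  have "fst (state t') \<noteq> None" if "t' \<le> T" for t'
    using state_done_stays[OF that] running by metis
  then obtain x y where xy: "fst (state t) = Some x" "fst (state (Suc t)) = Some y"
    using Suc.prems by fastforce
  have "t < T" using Suc.prems by simp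
  then have "dfs_before x y" using learn_step_inv(2)[OF _ learn_inv_state xy] by simp
  then have step: "dfs_before (the (fst (state t))) (the (fst (state (Suc t))))"
    using xy by simp
  show ?case
  proof (cases "s = t")
    case False
    with Suc have "dfs_before (the (fst (state s))) (the (fst (state t)))" by simp
    then show ?thesis using step by (rule dfs_before_trans)
  qed (use step in simp)
qed simp

lemma learn_run_terminates:
  assumes T: "real L / sqrt eps < real T"
  shows "fst (state T) = None"
proof (rule ccontr)
  assume running: "fst (state T) \<noteq> None"
  define node where "node t = the (fst (state t))" for t
  define V where "V = insert (0, 0) (child_nodes (large_gap_nodes F (6 * eps)))"
  have fin: "finite (large_gap_nodes F (6 * eps))" using card_large_gap_nodes(1)[OF F eps(1) L] .
  have inj: "inj_on node {..T}"
  proof (rule inj_onI)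
    fix s t assume st: "s \<in> {..T}" "t \<in> {..T}" "node s = node t"
    show "s = t"
    proof (rule ccontr)
      assume "s \<noteq> t"
      then have "dfs_before (node s) (node t) \<or> dfs_before (node t) (node s)"
        using visited_nodes_increase[OF running] st unfolding node_def by (metis atMost_iff nat_neq_iff)
      then show False using st dfs_before_irrefl by metis
    qed
  qed
  have visited: "node t \<in> V" if t: "t \<le> T" for t
  proof -
    have "fst (state t) \<noteq> None" using state_done_stays[OF t] running by metis
    then obtain j i where node: "fst (state t) = Some (j, i)" by (metis option.exhaust prod.exhaust)
    moreover have "i < 2 ^ j" "ancestors j i \<subseteq> large_gap_nodes F (6 * eps)"
      using learn_inv_state[OF t] node unfolding learn_inv_def by auto
    ultimately show ?thesis using node_in_child_nodes unfolding node_def V_def by simp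
  qed
  have "Suc T = card (node ` {..T})" using card_image[OF inj] by simp
  also have "\<dots> \<le> card V"
    using visited finite_child_nodes[OF fin] unfolding V_def by (intro card_mono) blast+
  also have "\<dots> \<le> Suc (2 * card (large_gap_nodes F (6 * eps)))"
    unfolding V_def using card_child_nodes_le[OF fin] finite_child_nodes[OF fin]
    by (simp add: card_insert_if)
  finally have "real T \<le> 2 * real (card (large_gap_nodes F (6 * eps)))" by simp
  also have "\<dots> \<le> real L / sqrt eps"
    using card_large_gap_nodes(2)[OF F eps(1) L] eps by (simp add: field_simps)
  finally show False using T by simp
qed

lemma learn_accuracy:
  assumes "real L / sqrt eps < real T"
  shows "\<bar>piecewise_estimate (snd (state T)) u - shear_inv F u\<bar> \<le> 39 * eps"
proof -
  have inv: "learn_inv F eps (state T)" by (rule learn_inv_state) simp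
  consider "u \<le> 0" | "2 \<le> u" | "0 < u" "u < 2" by linarith
  then show ?thesis
  proof cases
    case 3
    have "\<exists>p\<in>set (snd (state T)). piece_covers p u"
      using inv learn_run_terminates[OF assms] 3 unfolding learn_inv_def by auto
    then have "\<exists>p. p \<in> set (snd (state T)) \<and> piece_covers p u" by blast
    from someI_ex[OF this] have "piece_accurate F (39 * eps) (SOME p. p \<in> set (snd (state T)) \<and> piece_covers p u)
        \<and> piece_covers (SOME p. p \<in> set (snd (state T)) \<and> piece_covers p u) u"
      using inv unfolding learn_inv_def by blast
    then show ?thesis
      using 3 \<open>\<exists>p\<in>set (snd (state T)). piece_covers p u\<close>
      unfolding piecewise_estimate_def piece_accurate_def by (auto simp: abs_minus_commute)
  qed (use eps shear_inv_nonpos[OF F] shear_inv_ge_two[OF F] in \<open>auto simp: piecewise_estimate_def\<close>)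
qed

end

section \<open>Query count\<close>

lemma bisection_depth_bounds:
  assumes eps: "0 < eps" "eps < 1"
  shows "1 / eps \<le> 2 ^ nat \<lceil>log 2 (1 / eps)\<rceil>"
    and "real (nat \<lceil>log 2 (1 / eps)\<rceil>) \<le> 2 * (1 + ln (1 / eps))"
proof -
  define L where "L = nat \<lceil>log 2 (1 / eps)\<rceil>"
  have "0 < log 2 (1 / eps)" using eps by simp
  then have L: "log 2 (1 / eps) \<le> real L" "real L < log 2 (1 / eps) + 1"
    unfolding L_def by linarith+
  have "1 / eps = 2 powr (log 2 (1 / eps))" using eps by simp
  also have "\<dots> \<le> 2 ^ L" using L(1) by (simp add: powr_realpow[symmetric])
  finally show "1 / eps \<le> 2 ^ nat \<lceil>log 2 (1 / eps)\<rceil>" unfolding L_def .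
  have "0 < ln (1 / eps)" using eps by simp
  then have "log 2 (1 / eps) \<le> ln (1 / eps) / (2 / 3)"
    unfolding log_def using ln2_ge_two_thirds by (intro divide_left_mono) auto
  also have "\<dots> = 3 / 2 * ln (1 / eps)" by simp
  finally have "log 2 (1 / eps) \<le> 3 / 2 * ln (1 / eps)" .
  then have "real L \<le> 2 + 2 * ln (1 / eps)" using L(2) \<open>0 < ln (1 / eps)\<close> by linarith
  then have "real L \<le> 2 * (1 + ln (1 / eps))" by simp
  then show "real (nat \<lceil>log 2 (1 / eps)\<rceil>) \<le> 2 * (1 + ln (1 / eps))" unfolding L_def .
qed

lemma query_count_le:
  assumes eps: "0 < eps" "eps < 1" and L: "real L \<le> 2 * (1 + ln (1 / eps))"
  shows "real (3 * L * (nat \<lfloor>real L / sqrt eps\<rfloor> + 1)) \<le> 100 * eps powr (-1/2) * (1 + ln (1 / eps)) ^ 2"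
proof -
  define A where "A = 1 + ln (1 / eps)"
  have A: "1 \<le> A" unfolding A_def using eps by simp
  have s: "0 < sqrt eps" "sqrt eps \<le> 1" using eps by auto
  have "real (nat \<lfloor>real L / sqrt eps\<rfloor>) = of_int \<lfloor>real L / sqrt eps\<rfloor>"
    using s by (simp add: zero_le_floor)
  then have "real (nat \<lfloor>real L / sqrt eps\<rfloor> + 1) \<le> real L / sqrt eps + 1" by linarith
  also have "\<dots> \<le> 2 * A / sqrt eps + A / sqrt eps"
    using L A s order_trans[OF s(2) A] unfolding A_def[symmetric]
    by (intro add_mono divide_right_mono) (auto simp: le_divide_eq)
  finally have T: "real (nat \<lfloor>real L / sqrt eps\<rfloor> + 1) \<le> 3 * A / sqrt eps" by simp
  have "real (3 * L * (nat \<lfloor>real L / sqrt eps\<rfloor> + 1)) =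
      3 * real L * real (nat \<lfloor>real L / sqrt eps\<rfloor> + 1)" by (simp only: of_nat_mult of_nat_numeral)
  also have "\<dots> \<le> 3 * (2 * A) * (3 * A / sqrt eps)"
    using L T A s unfolding A_def[symmetric] by (intro mult_mono mult_left_mono) auto
  also have "\<dots> = 18 * A ^ 2 / sqrt eps" by (simp add: power2_eq_square)
  also have "\<dots> \<le> 100 * A ^ 2 / sqrt eps" using s by (intro divide_right_mono) auto
  also have "\<dots> = 100 * eps powr (-1/2) * A ^ 2"
  proof -
    have "eps powr (-1/2) = 1 / sqrt eps" using eps by (simp add: powr_minus_divide powr_half_sqrt)
    then show ?thesis by simp
  qed
  finally show ?thesis unfolding A_def .
qed

lemma learner_parameters:
  assumes eps: "0 < eps" "eps < 1"
  obtains L T :: nat where "1 / eps \<le> 2 ^ L" "real L / sqrt eps < real T"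
    and "real (3 * L * T) \<le> 100 * eps powr (-1/2) * (1 + ln (1 / eps)) ^ 2"
proof
  define L where "L = nat \<lceil>log 2 (1 / eps)\<rceil>"
  define T where "T = nat \<lfloor>real L / sqrt eps\<rfloor> + 1"
  show "1 / eps \<le> 2 ^ L" unfolding L_def by (rule bisection_depth_bounds(1)[OF eps])
  have "real (nat \<lfloor>real L / sqrt eps\<rfloor>) = of_int \<lfloor>real L / sqrt eps\<rfloor>"
    using eps by (simp add: zero_le_floor)
  then show "real L / sqrt eps < real T" unfolding T_def by linarith
  show "real (3 * L * T) \<le> 100 * eps powr (-1/2) * (1 + ln (1 / eps)) ^ 2"
    unfolding T_def using query_count_le[OF eps] bisection_depth_bounds(2)[OF eps] L_def by simp
qed

lemma learner_levy_set:
  assumes "smooth_convex_cdf F" "0 < eps" "eps < 1" "1 / eps \<le> 2 ^ L" "real L / sqrt eps < real T"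
    and "perturbed_answers eps F (3 * L * T) (learn_query L (12 * eps)) as"
  shows "39 * eps \<in> levy_set F (learn_output (snd (learn_run L (12 * eps) T as)))"
proof -
  interpret learner_run eps F as L T using assms by unfold_locales
  show ?thesis
    using levy_set_if_shear_inv_approx[OF F _ learn_accuracy[OF assms(5)]] eps
    unfolding learn_output_def by simp
qed

theorem theorem9:
  shows "\<exists>(C::real) (k::nat). C > 0 \<and>
    (\<forall>eps::real. 0 < eps \<and> eps < 1 \<longrightarrow>
      (\<exists>(N::nat) (q :: real list \<Rightarrow> real) (out :: real list \<Rightarrow> real \<Rightarrow> real).
         real N \<le> C * eps powr (-1/2) * (1 + ln (1 / eps)) ^ k \<and>
         (\<forall>F as. smooth_convex_cdf F \<longrightarrow> perturbed_answers eps F N q as \<longrightarrow>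
            levy_set F (out as) \<noteq> {} \<and> levy_dist F (out as) \<le> C * eps)))"
proof (rule exI[of _ 100], rule exI[of _ 2], intro conjI allI impI)
  fix eps :: real assume eps: "0 < eps \<and> eps < 1"
  then obtain L T where LT: "1 / eps \<le> 2 ^ L" "real L / sqrt eps < real T"
    and N: "real (3 * L * T) \<le> 100 * eps powr (-1/2) * (1 + ln (1 / eps)) ^ 2"
    using learner_parameters by blast
  have levy: "levy_set F (learn_output (snd (learn_run L (12 * eps) T as))) \<noteq> {} \<and>
      levy_dist F (learn_output (snd (learn_run L (12 * eps) T as))) \<le> 100 * eps"
    if "smooth_convex_cdf F" "perturbed_answers eps F (3 * L * T) (learn_query L (12 * eps)) as" for F as
    using learner_levy_set[OF that(1) _ _ LT that(2)] levy_dist_le eps by fastforce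
  show "\<exists>N q out. real N \<le> 100 * eps powr (-1/2) * (1 + ln (1 / eps)) ^ 2 \<and>
      (\<forall>F as. smooth_convex_cdf F \<longrightarrow> perturbed_answers eps F N q as \<longrightarrow>
         levy_set F (out as) \<noteq> {} \<and> levy_dist F (out as) \<le> 100 * eps)"
    by (rule exI[of _ "3 * L * T"], rule exI[of _ "learn_query L (12 * eps)"],
        rule exI[of _ "\<lambda>as. learn_output (snd (learn_run L (12 * eps) T as))"]) (use N levy in auto)
qed simp

end
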